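(* Let $\Phi=(V,\mathcal C)$ be a $(k,d,s)$-CNF formula and $c^*$ a clause with $|\mathrm{vbl}(c^* )|=k$. Let $p\ge1$ satisfy $\frac kp+\frac{ps}2\le k$, and let $\widetilde{\mathcal C}=\{c\in\mathcal C: |\mathrm{vbl}(c)\cap\mathrm{vbl}(c^* )|\ge\frac kp+\frac{ps}2\}$. Then $|\widetilde{\mathcal C}|\le p$.
   Context: A $(k,d,s)$-CNF formula is a CNF formula in which every clause contains exactly $k$ distinct variables, every variable appears in at most $d$ clauses, and any two distinct clauses share at most $s$ variables. $\mathrm{vbl}(c)$ denotes the set of variables of clause $c$. *)

theory Defs
  imports Complex_Main
begin

text \<open>A literal is a pair (variable, polarity); a clause is a set of literals;
  a CNF formula is a pair (V, C) of a variable set and a set of clauses.\<close>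

type_synonym 'v clause = "('v \<times> bool) set"

definition vbl :: "'v clause \<Rightarrow> 'v set" where
  "vbl c = fst ` c"

definition kds_CNF :: "nat \<Rightarrow> nat \<Rightarrow> nat \<Rightarrow> 'v set \<Rightarrow> 'v clause set \<Rightarrow> bool" where
  "kds_CNF k d s V C \<longleftrightarrow>
     finite V \<and> finite C \<and>
     (\<forall>c\<in>C. finite c \<and> vbl c \<subseteq> V \<and> card (vbl c) = k) \<and>
     (\<forall>x\<in>V. card {c\<in>C. x \<in> vbl c} \<le> d) \<and>
     (\<forall>c\<in>C. \<forall>c'\<in>C. c \<noteq> c' \<longrightarrow> card (vbl c \<inter> vbl c') \<le> s)"

end

theory Submission
  imports Defs
begin

text \<open>Suppose more than \<open>p\<close> clauses meet \<open>vbl c*\<close> in at least \<open>a = k/p + p s/2\<close> variables and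
  pick \<open>t = \<lfloor>p\<rfloor> + 1\<close> of them. Their traces on \<open>vbl c*\<close> pairwise share at most \<open>s\<close> variables,
  so by the second Bonferroni inequality their union, a subset of the \<open>k\<close> variables of \<open>c*\<close>,
  has at least \<open>t a - s t (t - 1)/2 \<ge> t k/p > k\<close> elements, using \<open>t - 1 \<le> p < t\<close>.\<close>

lemma card_UN_ge_pairwise_overlap:
  fixes A :: "'c \<Rightarrow> 'v set" and a :: real and s :: nat
  assumes "finite S"
    and "\<forall>c\<in>S. finite (A c) \<and> a \<le> real (card (A c))"
    and "\<forall>c\<in>S. \<forall>c'\<in>S. c \<noteq> c' \<longrightarrow> card (A c \<inter> A c') \<le> s"
  shows "real (card S) * a - real s * real (card S) * (real (card S) - 1) / 2
           \<le> real (card (\<Union>(A ` S)))"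
  using assms
proof (induction S rule: finite_induct)
  case empty
  then show ?case by simp
next
  case (insert x S)
  let ?U = "\<Union>(A ` S)" and ?n = "card S"
  have IH: "real ?n * a - real s * real ?n * (real ?n - 1) / 2 \<le> real (card ?U)"
    using insert by auto
  have "card (A x \<inter> ?U) \<le> (\<Sum>c\<in>S. card (A x \<inter> A c))"
    unfolding Int_UN_distrib by (rule card_UN_le[OF insert.hyps(1)])
  also have "\<dots> \<le> ?n * s"
    using sum_mono[of S "\<lambda>c. card (A x \<inter> A c)" "\<lambda>_. s"] insert by fastforce
  finally have overlap: "real (card (A x \<inter> ?U)) \<le> real ?n * real s"
    by (metis of_nat_le_iff of_nat_mult)
  have "card (A x \<union> ?U) + card (A x \<inter> ?U) = card (A x) + card ?U"
    using card_Un_Int[of "A x" ?U] insert by auto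
  then have "real (card (A x \<union> ?U)) = real (card (A x)) + real (card ?U) - real (card (A x \<inter> ?U))"
    by (metis add_diff_cancel_right' of_nat_add)
  then have "a + (real ?n * a - real s * real ?n * (real ?n - 1) / 2) - real ?n * real s
      \<le> real (card (A x \<union> ?U))"
    using IH overlap insert by auto
  moreover have "card (insert x S) = ?n + 1"
    using insert by simp
  ultimately show ?case
    by (simp add: field_simps)
qed

lemma Bonferroni_bound_exceeds:
  fixes k p s t :: real
  assumes "0 < k" "0 < p" "0 \<le> s" "p < t" "t \<le> p + 1"
  shows "k < t * (k / p + p * s / 2) - s * t * (t - 1) / 2"
proof -
  have "k < t * (k / p)"
    using assms by (simp add: field_simps)
  also have "\<dots> \<le> t * (k / p) + s * t * (p - (t - 1)) / 2"
    using assms by simp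
  also have "\<dots> = t * (k / p + p * s / 2) - s * t * (t - 1) / 2"
    by (simp add: field_simps)
  finally show ?thesis .
qed

lemma card_le_if_large_traces_small_overlaps:
  fixes A :: "'c \<Rightarrow> 'v set" and p :: real and s :: nat
  assumes "finite W" "card W > 0" "p > 0" "finite F"
    and large: "\<forall>c\<in>F. A c \<subseteq> W \<and> real (card W) / p + p * real s / 2 \<le> real (card (A c))"
    and small: "\<forall>c\<in>F. \<forall>c'\<in>F. c \<noteq> c' \<longrightarrow> card (A c \<inter> A c') \<le> s"
  shows "real (card F) \<le> p"
proof (rule ccontr)
  assume "\<not> real (card F) \<le> p"
  define t where "t = nat \<lfloor>p\<rfloor> + 1"
  have t: "p < real t" "real t \<le> p + 1"
    unfolding t_def using \<open>p > 0\<close> by linarith+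
  then have "t \<le> card F"
    using \<open>\<not> real (card F) \<le> p\<close> unfolding t_def by linarith
  then obtain S where S: "S \<subseteq> F" "card S = t"
    by (meson obtain_subset_with_card_n)
  have "real t * (real (card W) / p + p * real s / 2) - real s * real t * (real t - 1) / 2
      \<le> real (card (\<Union>(A ` S)))"
    unfolding S(2)[symmetric]
    using S large small \<open>finite W\<close> \<open>finite F\<close>
    by (intro card_UN_ge_pairwise_overlap) (auto intro: finite_subset, blast)
  also have "\<dots> \<le> real (card W)"
    using S large \<open>finite W\<close> by (auto intro: card_mono)
  finally show False
    using Bonferroni_bound_exceeds[of "real (card W)" p "real s" "real t"] t assms(2,3)
    by linarith
qed

theorem corollary3p9:
  fixes V :: "'v set" and C :: "'v clause set" and cstar :: "'v clause"
    and k d s :: nat and p :: real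
  assumes "kds_CNF k d s V C"
    and "finite (vbl cstar)" and "card (vbl cstar) = k"
    and "p \<ge> 1"
    and "real k / p + p * real s / 2 \<le> real k"
  shows "real (card {c\<in>C. real (card (vbl c \<inter> vbl cstar)) \<ge> real k / p + p * real s / 2}) \<le> p"
proof -
  define T where "T = {c\<in>C. real (card (vbl c \<inter> vbl cstar)) \<ge> real k / p + p * real s / 2}"
  have C: "finite C" "\<forall>c\<in>C. finite c \<and> card (vbl c) = k"
    "\<forall>c\<in>C. \<forall>c'\<in>C. c \<noteq> c' \<longrightarrow> card (vbl c \<inter> vbl c') \<le> s"
    using assms(1) unfolding kds_CNF_def by auto
  show ?thesis
  proof (cases "k = 0")
    case True
    then have "T \<subseteq> {{}}"
      using C(2) by (auto simp: T_def vbl_def)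
    then have "card T \<le> 1"
      using card_mono[of "{{}}" T] by simp
    then show ?thesis
      using assms(4) unfolding T_def by linarith
  next
    case False
    have "card ((vbl c \<inter> vbl cstar) \<inter> (vbl c' \<inter> vbl cstar)) \<le> s"
      if "c \<in> T" "c' \<in> T" "c \<noteq> c'" for c c'
    proof -
      have "finite (vbl c)"
        using that C(2) unfolding T_def vbl_def by auto
      then have "card ((vbl c \<inter> vbl cstar) \<inter> (vbl c' \<inter> vbl cstar)) \<le> card (vbl c \<inter> vbl c')"
        by (intro card_mono) auto
      then show ?thesis
        using that C(3) unfolding T_def by fastforce
    qed
    then show ?thesis
      using assms(2-4) False C(1) unfolding T_def
      by (intro card_le_if_large_traces_small_overlaps
            [where W = "vbl cstar" and A = "\<lambda>c. vbl c \<inter> vbl cstar" and s = s]) auto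
  qed
qed

end
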